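(* Let $x\in(0,\infty)$. The unique default ABMN solution with central ratio $\frac{n_{-1}-n_0}{m_0-m_{-1}}=x$ is $\{(a^{\rm def}_i(x),b^{\rm def}_i(x),m^{\rm def}_i(x),n^{\rm def}_i(x)):i\in\mathbb{Z}\}$, where: $m^{\rm def}(x)$ is the increasing sequence with $\lim_{i\to-\infty}m^{\rm def}_i(x)=0$ and $m^{\rm def}_{k+1}(x)-m^{\rm def}_k(x)=\prod_{i=0}^k(c_i(x)-1)$ for $k\in\mathbb{Z}$; $n^{\rm def}(x)$ is the decreasing sequence with $\lim_{i\to\infty}n^{\rm def}_i(x)=0$ and $n^{\rm def}_k(x)-n^{\rm def}_{k+1}(x)=x\prod_{i=0}^k(d_i(x)-1)$ for $k\in\mathbb{Z}$; and, with $M_i=m^{\rm def}_{i+1}(x)-m^{\rm def}_{i-1}(x)$, $N_i=n^{\rm def}_{i-1}(x)-n^{\rm def}_{i+1}(x)$, $a^{\rm def}_i(x)=\frac{M_i^2N_i}{(M_i+N_i)^2}$ and $b^{\rm def}_i(x)=\frac{M_iN_i^2}{(M_i+N_i)^2}$.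
   Context: ABMN system on $\mathbb{Z}$: real variables $a_i,b_i\ge0$, $m_i,n_i$ with, for all $i$, $(a_i+b_i)(m_i+a_i)=a_im_{i+1}+b_im_{i-1}$, $(a_i+b_i)(n_i+b_i)=a_in_{i+1}+b_in_{i-1}$, $(a_i+b_i)^2=b_i(m_{i+1}-m_{i-1})$, $(a_i+b_i)^2=a_i(n_{i-1}-n_{i+1})$. A solution is positive if all $a_i,b_i>0$; default if positive with $\lim_{i\to-\infty}m_i=0$, $\lim_{i\to\infty}n_i=0$, $m_0-m_{-1}=1$. Functions: for $x>0$ let $\omega=\sqrt{8x+1}$, $c(x)=\frac{(\omega+3)^2}{16}$, $d(x)=\frac{(\omega+3)^2}{8(\omega+1)}$, $s(x)=\frac{(\omega-1)^2}{4(\omega+7)}$. Let $s_{-1}(x)=1/s(1/x)$, $s_0(x)=x$, and for $i\in\mathbb{N}_+$, $s_i=s\circ s_{i-1}$, $s_{-i}=s_{-1}\circ s_{-(i-1)}$. Set $c_j=c\circ s_j$, $d_j=d\circ s_j$ for $j\in\mathbb{Z}$. Product convention: $\prod_{i=0}^k h_i=h_0\cdots h_k$ for $k\ge0$, $=1$ for $k=-1$, and $=h_{k+1}^{-1}\cdots h_{-1}^{-1}$ for $k\le-2$. *)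

theory Defs
  imports Complex_Main
begin

definition ABMN_solution :: "(int \<Rightarrow> real) \<Rightarrow> (int \<Rightarrow> real) \<Rightarrow> (int \<Rightarrow> real) \<Rightarrow> (int \<Rightarrow> real) \<Rightarrow> bool" where
  "ABMN_solution a b m n \<longleftrightarrow> (\<forall>i::int.
     a i \<ge> 0 \<and> b i \<ge> 0 \<and>
     (a i + b i) * (m i + a i) = a i * m (i+1) + b i * m (i-1) \<and>
     (a i + b i) * (n i + b i) = a i * n (i+1) + b i * n (i-1) \<and>
     (a i + b i)^2 = b i * (m (i+1) - m (i-1)) \<and>
     (a i + b i)^2 = a i * (n (i-1) - n (i+1)))"

definition ABMN_positive :: "(int \<Rightarrow> real) \<Rightarrow> (int \<Rightarrow> real) \<Rightarrow> (int \<Rightarrow> real) \<Rightarrow> (int \<Rightarrow> real) \<Rightarrow> bool" where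
  "ABMN_positive a b m n \<longleftrightarrow> ABMN_solution a b m n \<and> (\<forall>i. a i > 0 \<and> b i > 0)"

definition ABMN_default :: "(int \<Rightarrow> real) \<Rightarrow> (int \<Rightarrow> real) \<Rightarrow> (int \<Rightarrow> real) \<Rightarrow> (int \<Rightarrow> real) \<Rightarrow> bool" where
  "ABMN_default a b m n \<longleftrightarrow> ABMN_positive a b m n \<and>
     (m \<longlongrightarrow> 0) at_bot \<and> (n \<longlongrightarrow> 0) at_top \<and> m 0 - m (-1) = 1"

definition omg :: "real \<Rightarrow> real" where "omg x = sqrt (8*x + 1)"
definition cfun :: "real \<Rightarrow> real" where "cfun x = (omg x + 3)^2 / 16"
definition dfun :: "real \<Rightarrow> real" where "dfun x = (omg x + 3)^2 / (8 * (omg x + 1))"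
definition sfun :: "real \<Rightarrow> real" where "sfun x = (omg x - 1)^2 / (4 * (omg x + 7))"
definition sfun_m1 :: "real \<Rightarrow> real" where "sfun_m1 x = 1 / sfun (1 / x)"

definition s_iter :: "int \<Rightarrow> real \<Rightarrow> real" where
  "s_iter j = (if j \<ge> 0 then sfun ^^ nat j else sfun_m1 ^^ nat (- j))"

definition c_j :: "int \<Rightarrow> real \<Rightarrow> real" where "c_j j x = cfun (s_iter j x)"
definition d_j :: "int \<Rightarrow> real \<Rightarrow> real" where "d_j j x = dfun (s_iter j x)"

text \<open>Product convention: h_0...h_k for k >= 0, 1 for k = -1,
  and h_(k+1)^-1 ... h_(-1)^-1 for k <= -2.\<close>
definition gprod :: "(int \<Rightarrow> real) \<Rightarrow> int \<Rightarrow> real" where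
  "gprod h k = (if k \<ge> 0 then (\<Prod>i\<in>{0..k}. h i)
                else (\<Prod>i\<in>{k+1..-1}. inverse (h i)))"

definition is_def_solution :: "real \<Rightarrow> (int \<Rightarrow> real) \<Rightarrow> (int \<Rightarrow> real) \<Rightarrow> (int \<Rightarrow> real) \<Rightarrow> (int \<Rightarrow> real) \<Rightarrow> bool" where
  "is_def_solution x a b m n \<longleftrightarrow>
     mono m \<and> (m \<longlongrightarrow> 0) at_bot \<and>
     (\<forall>k. m (k+1) - m k = gprod (\<lambda>i. c_j i x - 1) k) \<and>
     antimono n \<and> (n \<longlongrightarrow> 0) at_top \<and>
     (\<forall>k. n k - n (k+1) = x * gprod (\<lambda>i. d_j i x - 1) k) \<and>
     (\<forall>i. a i = (m (i+1) - m (i-1))^2 * (n (i-1) - n (i+1))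
                 / ((m (i+1) - m (i-1)) + (n (i-1) - n (i+1)))^2) \<and>
     (\<forall>i. b i = (m (i+1) - m (i-1)) * (n (i-1) - n (i+1))^2
                 / ((m (i+1) - m (i-1)) + (n (i-1) - n (i+1)))^2)"

end

theory Submission
  imports Defs
begin

(*
  Substituting omega = 4 tau + 1 makes everything rational: y = tau (1 + 2 tau),
  c(y) = (1 + tau)^2, d(y) = (1 + tau)^2 / (1 + 2 tau) and s(y) = tau^2 / (tau + 2).

  At a single site i, with increments p = m_i - m_(i-1) and u = n_(i-1) - n_i, the ABMN
  equations with a_i, b_i > 0 hold iff there is tau > 0 with a_i = p tau, b_i = p tau^2,
  m_(i+1) - m_i = p tau (tau + 2), u = p tau (1 + 2 tau) and n_i - n_(i+1) = p tau^3, i.e.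
  iff the next increments are p (c(u/p) - 1) and u (d(u/p) - 1) and a_i, b_i are given by the
  stated formulas. The identity y (d(y) - 1) = s(y) (c(y) - 1) shows that the ratio of the
  increments follows an orbit of s, and s is injective, so m_0 - m_(-1) = 1 and the central
  ratio x determine all increments as the stated products. The boundary limits fix the additive
  constants. Conversely the products decay geometrically in both directions, because s shrinks
  by a factor of at least 5, so summing them gives the solution.
*)

section \<open>The parametrisation by tau\<close>

definition tau :: "real \<Rightarrow> real" where "tau y = (omg y - 1) / 4"

lemma omg_eq_tau: "omg y = 4 * tau y + 1"
  by (simp add: tau_def field_simps)

lemma tau_pos: "0 < y \<Longrightarrow> 0 < tau y"
  by (simp add: tau_def omg_def)

lemma tau_param: "0 < y \<Longrightarrow> y = tau y * (1 + 2 * tau y)"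
  by (simp add: tau_def omg_def field_simps power2_eq_square[symmetric])

lemma tau_of_param: "0 \<le> t \<Longrightarrow> tau (t * (1 + 2 * t)) = t"
proof -
  assume "0 \<le> t"
  moreover have "8 * (t * (1 + 2 * t)) + 1 = (4 * t + 1)\<^sup>2"
    by (simp add: algebra_simps power2_eq_square)
  ultimately show ?thesis by (simp add: tau_def omg_def)
qed

lemma cfun_minus_one_tau: "cfun y - 1 = tau y * (tau y + 2)"
  by (simp add: cfun_def omg_eq_tau power2_eq_square algebra_simps)

lemma dfun_minus_one_tau: "0 < y \<Longrightarrow> dfun y - 1 = (tau y)\<^sup>2 / (1 + 2 * tau y)"
  using tau_pos[of y] by (simp add: dfun_def omg_eq_tau power2_eq_square field_simps)

lemma sfun_tau: "0 < y \<Longrightarrow> sfun y = (tau y)\<^sup>2 / (tau y + 2)"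
  using tau_pos[of y] by (simp add: sfun_def omg_eq_tau power2_eq_square field_simps)

lemma cfun_minus_one_pos: "0 < y \<Longrightarrow> 0 < cfun y - 1"
  using tau_pos[of y] by (simp add: cfun_minus_one_tau)

lemma dfun_minus_one_pos: "0 < y \<Longrightarrow> 0 < dfun y - 1"
  using tau_pos[of y] by (simp add: dfun_minus_one_tau)

lemma cfun_minus_one_ge: "0 < y \<Longrightarrow> y / 2 \<le> cfun y - 1"
  using tau_pos[of y] tau_param[of y] by (simp add: cfun_minus_one_tau field_simps)

lemma dfun_minus_one_le:
  assumes "0 < y"
  shows "dfun y - 1 \<le> y / 2"
proof -
  define t where "t = tau y"
  have "0 < t" using tau_pos assms by (simp add: t_def)
  then have "t\<^sup>2 / (1 + 2 * t) \<le> t * (1 + 2 * t) / 2"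
    by (simp add: field_simps power2_eq_square)
  then show ?thesis using assms tau_param[of y] by (simp add: dfun_minus_one_tau t_def)
qed

lemma sfun_cfun_eq_dfun:
  assumes "0 < y"
  shows "sfun y * (cfun y - 1) = y * (dfun y - 1)"
proof -
  define t where "t = tau y"
  have "0 < t" using tau_pos assms by (simp add: t_def)
  have "sfun y * (cfun y - 1) = t\<^sup>2 / (t + 2) * (t * (t + 2))"
    using assms by (simp add: sfun_tau cfun_minus_one_tau t_def)
  also have "\<dots> = t * (1 + 2 * t) * (t\<^sup>2 / (1 + 2 * t))"
    using \<open>0 < t\<close> by (simp add: field_simps power2_eq_square)
  also have "\<dots> = y * (dfun y - 1)"
    using assms tau_param[of y] by (simp add: dfun_minus_one_tau t_def)
  finally show ?thesis .
qed

section \<open>The maps s_j\<close>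

lemma sfun_pos: "0 < y \<Longrightarrow> 0 < sfun y"
  using tau_pos[of y] by (simp add: sfun_tau)

lemma sfun_le:
  assumes "0 < y"
  shows "sfun y \<le> y / 5"
proof -
  define t where "t = tau y"
  have "0 < t" using tau_pos assms by (simp add: t_def)
  then have "t\<^sup>2 / (t + 2) \<le> t * (1 + 2 * t) / 5"
    by (simp add: field_simps power2_eq_square)
  then show ?thesis using assms tau_param[of y] by (simp add: sfun_tau t_def)
qed

lemma sfun_inj:
  assumes "0 < y" "0 < z" "sfun y = sfun z"
  shows "y = z"
proof -
  define t t' where "t = tau y" and "t' = tau z"
  have "0 < t" "0 < t'" using tau_pos assms by (auto simp: t_def t'_def)
  moreover have "t\<^sup>2 / (t + 2) = t'\<^sup>2 / (t' + 2)"
    using assms by (simp add: sfun_tau t_def t'_def)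
  ultimately have "(t - t') * (t * t' + 2 * t + 2 * t') = 0"
    by (simp add: field_simps power2_eq_square)
  moreover have "0 < t * t' + 2 * t + 2 * t'"
    using \<open>0 < t\<close> \<open>0 < t'\<close> by (simp add: add_pos_pos)
  ultimately have "t = t'" by simp
  then show ?thesis using tau_param assms by (metis t_def t'_def)
qed

lemma sfun_sfun_m1:
  assumes "0 < y"
  shows "sfun (sfun_m1 y) = y"
proof -
  define t where "t = tau (1 / y)"
  have "0 < t" using tau_pos assms by (simp add: t_def)
  have "sfun_m1 y = (t + 2) / t\<^sup>2"
    using sfun_tau[of "1 / y"] assms by (simp add: sfun_m1_def t_def)
  also have "\<dots> = (1 / t) * (1 + 2 * (1 / t))"
    using \<open>0 < t\<close> by (simp add: field_simps power2_eq_square)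
  finally have "sfun_m1 y = 1 / t * (1 + 2 * (1 / t))" .
  then have "tau (sfun_m1 y) = 1 / t"
    using tau_of_param[of "1 / t"] \<open>0 < t\<close> by simp
  moreover have "0 < sfun_m1 y"
    using sfun_pos assms by (simp add: sfun_m1_def)
  ultimately have "sfun (sfun_m1 y) = (1 / t)\<^sup>2 / (1 / t + 2)"
    by (simp add: sfun_tau)
  also have "\<dots> = 1 / (t * (1 + 2 * t))"
    using \<open>0 < t\<close> by (simp add: field_simps power2_eq_square)
  also have "\<dots> = y"
    using tau_param[of "1 / y"] assms by (simp add: t_def)
  finally show ?thesis .
qed

lemma s_iter_pos: "0 < x \<Longrightarrow> 0 < s_iter j x"
proof -
  assume "0 < x"
  have "0 < (sfun ^^ k) x" "0 < (sfun_m1 ^^ k) x" for k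
    by (induction k) (simp_all add: \<open>0 < x\<close> sfun_pos sfun_m1_def)
  then show ?thesis by (simp add: s_iter_def)
qed

lemma s_iter_succ:
  assumes "0 < x"
  shows "s_iter (j + 1) x = sfun (s_iter j x)"
proof (cases "0 \<le> j")
  case True
  then have "nat (j + 1) = Suc (nat j)" by simp
  with True show ?thesis by (simp add: s_iter_def)
next
  case False
  then have "nat (- j) = Suc (nat (- (j + 1)))" by simp
  moreover have "0 < s_iter (j + 1) x" using s_iter_pos assms .
  ultimately show ?thesis
    using False sfun_sfun_m1 by (auto simp: s_iter_def)
qed

lemma s_iter_nat_le: "0 < x \<Longrightarrow> s_iter (int k) x \<le> x / 5 ^ k"
proof (induction k)
  case (Suc k)
  have "s_iter (int (Suc k)) x = sfun (s_iter (int k) x)"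
    using s_iter_succ[OF Suc.prems, of "int k"] by (simp add: add.commute)
  also have "\<dots> \<le> s_iter (int k) x / 5"
    using sfun_le s_iter_pos Suc.prems by blast
  also have "\<dots> \<le> x / 5 ^ Suc k"
    using Suc by (simp add: field_simps)
  finally show ?case .
qed (simp add: s_iter_def)

lemma s_iter_neg_ge: "0 < x \<Longrightarrow> 5 ^ k * x \<le> s_iter (- int k) x"
proof (induction k)
  case (Suc k)
  have "s_iter (- int k) x = sfun (s_iter (- int (Suc k)) x)"
    using s_iter_succ[OF Suc.prems, of "- int (Suc k)"] by simp
  also have "\<dots> \<le> s_iter (- int (Suc k)) x / 5"
    using sfun_le s_iter_pos Suc.prems by blast
  finally show ?case using Suc by simp
qed (simp add: s_iter_def)

lemma s_iter_orbit:
  assumes pos: "\<And>k. 0 < r k" and step: "\<And>k. r (k + 1) = sfun (r k)"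
  shows "r k = s_iter (k + 1) (r (-1))"
proof (induction k rule: int_induct[where k = "-1"])
  case base
  then show ?case by (simp add: s_iter_def)
next
  case (step1 k)
  then show ?case using step[of k] s_iter_succ[OF pos, of "k + 1"] by simp
next
  case (step2 k)
  have "sfun (r (k - 1)) = sfun (s_iter k (r (-1)))"
    using step[of "k - 1"] step2 s_iter_succ[OF pos, of k] by simp
  then show ?case using sfun_inj pos s_iter_pos[OF pos] by simp
qed

section \<open>The products\<close>

lemma gprod_minus_one [simp]: "gprod h (-1) = 1"
  by (simp add: gprod_def)

lemma gprod_pos: "(\<And>i. 0 < h i) \<Longrightarrow> 0 < gprod h k"
  by (auto simp: gprod_def intro!: prod_pos)

lemma gprod_step:
  assumes "h k \<noteq> 0"
  shows "gprod h k = h k * gprod h (k - 1)"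
proof -
  consider "1 \<le> k" | "k = 0" | "k \<le> -1" by linarith
  then show ?thesis
  proof cases
    case 1
    then have "{0..k} = insert k {0..k - 1}" by auto
    with 1 show ?thesis by (simp add: gprod_def)
  next
    case 3
    then have "{k - 1 + 1..-1} = insert k {k + 1..-1}" by auto
    with 3 assms show ?thesis by (simp add: gprod_def)
  qed (simp add: gprod_def)
qed

lemma eq_gprod_if_recurrence:
  assumes rec: "\<And>k. f k = h k * f (k - 1)" and nz: "\<And>k. h k \<noteq> 0"
  shows "f k = f (-1) * gprod h k"
proof (induction k rule: int_induct[where k = "-1"])
  case (step1 k)
  then show ?case using rec[of "k + 1"] gprod_step[of h "k + 1"] nz by simp
next
  case (step2 k)
  have "h k * f (k - 1) = h k * (f (-1) * gprod h (k - 1))"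
    using step2 rec[of k] gprod_step[of h k] nz by simp
  then show ?case using nz[of k] by simp
qed simp

abbreviation cprod :: "real \<Rightarrow> int \<Rightarrow> real" where
  "cprod x k \<equiv> gprod (\<lambda>i. c_j i x - 1) k"

abbreviation dprod :: "real \<Rightarrow> int \<Rightarrow> real" where
  "dprod x k \<equiv> gprod (\<lambda>i. d_j i x - 1) k"

lemma c_j_minus_one_pos: "0 < x \<Longrightarrow> 0 < c_j i x - 1"
  unfolding c_j_def by (rule cfun_minus_one_pos[OF s_iter_pos])

lemma d_j_minus_one_pos: "0 < x \<Longrightarrow> 0 < d_j i x - 1"
  unfolding d_j_def by (rule dfun_minus_one_pos[OF s_iter_pos])

lemma cprod_pos: "0 < x \<Longrightarrow> 0 < cprod x k"
  using c_j_minus_one_pos by (rule gprod_pos)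

lemma dprod_pos: "0 < x \<Longrightarrow> 0 < dprod x k"
  using d_j_minus_one_pos by (rule gprod_pos)

lemma cprod_step: "0 < x \<Longrightarrow> cprod x k = (c_j k x - 1) * cprod x (k - 1)"
  using c_j_minus_one_pos[of x k] by (intro gprod_step) simp

lemma dprod_step: "0 < x \<Longrightarrow> dprod x k = (d_j k x - 1) * dprod x (k - 1)"
  using d_j_minus_one_pos[of x k] by (intro gprod_step) simp

lemma dprod_eq_s_iter_cprod:
  assumes "0 < x"
  shows "x * dprod x k = s_iter (k + 1) x * cprod x k"
proof -
  \<comment> \<open>Both sides satisfy the recurrence of dprod, by sfun_cfun_eq_dfun.\<close>
  define f where "f k = s_iter (k + 1) x * cprod x k" for k
  have rec: "f k = (d_j k x - 1) * f (k - 1)" for k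
  proof -
    have "f k = sfun (s_iter k x) * (cfun (s_iter k x) - 1) * cprod x (k - 1)"
      unfolding f_def using s_iter_succ[OF assms, of k] cprod_step[OF assms, of k]
      by (simp add: c_j_def)
    also have "\<dots> = s_iter k x * (dfun (s_iter k x) - 1) * cprod x (k - 1)"
      using sfun_cfun_eq_dfun[OF s_iter_pos[OF assms]] by simp
    also have "\<dots> = (d_j k x - 1) * f (k - 1)"
      by (simp add: f_def d_j_def)
    finally show ?thesis .
  qed
  then have "f k = f (-1) * dprod x k"
    using eq_gprod_if_recurrence[of f "\<lambda>i. d_j i x - 1", OF rec]
      d_j_minus_one_pos[OF assms, THEN less_imp_neq, THEN not_sym]
    by blast
  then show ?thesis by (simp add: f_def s_iter_def)
qed

lemma c_j_eventually_ge:
  assumes "0 < x"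
  shows "\<exists>J. \<forall>j \<le> J. 2 \<le> c_j j x - 1"
proof -
  obtain K where K: "4 / x < 5 ^ K" using real_arch_pow[of 5 "4 / x"] by auto
  have "2 \<le> c_j j x - 1" if "j \<le> - int K" for j
  proof -
    have "4 < 5 ^ K * x" using K assms by (simp add: field_simps)
    also have "\<dots> \<le> 5 ^ nat (- j) * x"
      using assms that by (intro mult_right_mono power_increasing) auto
    also have "\<dots> \<le> s_iter j x" using s_iter_neg_ge[OF assms, of "nat (- j)"] that by simp
    finally show ?thesis
      using cfun_minus_one_ge[OF s_iter_pos[OF assms, of j]] by (simp add: c_j_def)
  qed
  then show ?thesis by blast
qed

lemma d_j_eventually_le:
  assumes "0 < x"
  shows "\<exists>J. \<forall>j \<ge> J. d_j j x - 1 \<le> 1 / 2"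
proof -
  obtain K where K: "x < 5 ^ K" using real_arch_pow[of 5 x] by auto
  have "d_j j x - 1 \<le> 1 / 2" if "int K \<le> j" for j
  proof -
    have "x < 5 ^ K" by (fact K)
    also have "\<dots> \<le> 5 ^ nat j" using that by (intro power_increasing) auto
    finally have "x \<le> 5 ^ nat j" by simp
    have "s_iter j x \<le> x / 5 ^ nat j"
      using s_iter_nat_le[OF assms, of "nat j"] that by simp
    also have "\<dots> \<le> 1"
      using \<open>x \<le> 5 ^ nat j\<close> by simp
    finally have "s_iter j x \<le> 1" .
    then show ?thesis
      using dfun_minus_one_le[OF s_iter_pos[OF assms, of j]] by (simp add: d_j_def)
  qed
  then show ?thesis by blast
qed

lemma summable_cprod: "0 < x \<Longrightarrow> summable (\<lambda>n. cprod x (- int n))"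
proof -
  assume x: "0 < x"
  obtain J where J: "\<And>j. j \<le> J \<Longrightarrow> 2 \<le> c_j j x - 1"
    using c_j_eventually_ge[OF x] by blast
  show ?thesis
  proof (rule summable_ratio_test[where c = "1 / 2" and N = "nat (- J)"])
    fix n :: nat
    assume "nat (- J) \<le> n"
    then have "2 \<le> c_j (- int n) x - 1" using J by simp
    moreover have "cprod x (- int n) = (c_j (- int n) x - 1) * cprod x (- int (Suc n))"
    proof -
      have "- int n - 1 = - int (Suc n)" by simp
      then show ?thesis using cprod_step[OF x, of "- int n"] by (simp only:)
    qed
    ultimately show "norm (cprod x (- int (Suc n))) \<le> 1 / 2 * norm (cprod x (- int n))"
      using cprod_pos[OF x, of "- int (Suc n)"] cprod_pos[OF x, of "- int n"]
      by (simp add: mult_right_mono)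
  qed simp
qed

lemma summable_dprod: "0 < x \<Longrightarrow> summable (\<lambda>n. x * dprod x (int n))"
proof -
  assume x: "0 < x"
  obtain J where J: "\<And>j. J \<le> j \<Longrightarrow> d_j j x - 1 \<le> 1 / 2"
    using d_j_eventually_le[OF x] by blast
  show ?thesis
  proof (rule summable_ratio_test[where c = "1 / 2" and N = "nat J"])
    fix n :: nat
    assume "nat J \<le> n"
    then have "d_j (int (Suc n)) x - 1 \<le> 1 / 2" using J by simp
    moreover have "dprod x (int (Suc n)) = (d_j (int (Suc n)) x - 1) * dprod x (int n)"
      using dprod_step[OF x, of "int (Suc n)"] by simp
    ultimately show "norm (x * dprod x (int (Suc n))) \<le> 1 / 2 * norm (x * dprod x (int n))"
      using dprod_pos[OF x, of "int n"] d_j_minus_one_pos[OF x, of "int (Suc n)"] x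
      by (simp add: abs_mult mult_right_mono)
  qed simp
qed

section \<open>The system at a single site\<close>

(* The equations at site i in terms of the increments p = m_i - m_(i-1), P = m_(i+1) - m_i,
   u = n_(i-1) - n_i and U = n_i - n_(i+1). *)
definition ABMN_local :: "real \<Rightarrow> real \<Rightarrow> real \<Rightarrow> real \<Rightarrow> real \<Rightarrow> real \<Rightarrow> bool" where
  "ABMN_local a b p P u U \<longleftrightarrow> 0 < a \<and> 0 < b \<and>
     (a + b) * a = a * P - b * p \<and> (a + b) * b = b * u - a * U \<and>
     (a + b)\<^sup>2 = b * (P + p) \<and> (a + b)\<^sup>2 = a * (U + u)"

lemma ABMN_local_imp_param:
  assumes "ABMN_local a b p P u U"
  shows "\<exists>t > 0. 0 < p \<and> a = p * t \<and> b = p * t\<^sup>2 \<and>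
     P = p * t * (t + 2) \<and> u = p * t * (1 + 2 * t) \<and> U = p * t ^ 3"
proof -
  define t where "t = b / a"
  from assms have a: "0 < a" and t: "0 < t" and e1: "(a + a * t) * a = a * P - a * t * p"
    and e2: "(a + a * t) * (a * t) = a * t * u - a * U" and e3: "(a + a * t)\<^sup>2 = a * t * (P + p)"
    and e4: "(a + a * t)\<^sup>2 = a * (U + u)"
    by (simp_all add: ABMN_local_def t_def)
  have "a * ((1 + t) * (p * t - a)) = 0" using e1 e3 by algebra
  then have pt: "p * t = a" using a t by simp
  have "a * ((1 + t) * (u - a * (1 + 2 * t))) = 0" using e2 e4 by algebra
  then have u: "u = a * (1 + 2 * t)" using a t by simp
  have "a * (P - p * t * (t + 2)) = 0" using e1 pt by algebra
  moreover have "a * (U - p * t ^ 3) = 0" using e4 pt u by algebra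
  ultimately have "P = p * t * (t + 2)" "U = p * t ^ 3" using a by simp_all
  moreover have "0 < p" using pt a t by (metis zero_less_mult_pos2)
  moreover have "b = a * t" using a by (simp add: t_def)
  ultimately show ?thesis using t pt u by (auto simp: power2_eq_square)
qed

lemma ABMN_local_iff_param:
  "ABMN_local a b p P u U \<longleftrightarrow> (\<exists>t > 0. 0 < p \<and> a = p * t \<and> b = p * t\<^sup>2 \<and>
     P = p * t * (t + 2) \<and> u = p * t * (1 + 2 * t) \<and> U = p * t ^ 3)"
  by (rule iffI[OF ABMN_local_imp_param])
    (auto simp: ABMN_local_def algebra_simps power2_eq_square power3_eq_cube)

lemma weights_param:
  fixes p t :: real
  assumes "0 < p" "0 < t"
  defines "M \<equiv> p * (1 + t)\<^sup>2"
  shows "M\<^sup>2 * (t * M) / (M + t * M)\<^sup>2 = p * t" and "M * (t * M)\<^sup>2 / (M + t * M)\<^sup>2 = p * t\<^sup>2"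
proof -
  have "0 < M" using assms(1,2) unfolding M_def by simp
  moreover have "(M + t * M)\<^sup>2 = M\<^sup>2 * (1 + t)\<^sup>2"
    by (simp add: algebra_simps power2_eq_square)
  ultimately have "M\<^sup>2 * (t * M) / (M + t * M)\<^sup>2 = t * M / (1 + t)\<^sup>2"
    "M * (t * M)\<^sup>2 / (M + t * M)\<^sup>2 = t\<^sup>2 * M / (1 + t)\<^sup>2"
    by (simp_all add: power2_eq_square)
  moreover have "t * M / (1 + t)\<^sup>2 = p * t" "t\<^sup>2 * M / (1 + t)\<^sup>2 = p * t\<^sup>2"
    using assms by simp_all
  ultimately show "M\<^sup>2 * (t * M) / (M + t * M)\<^sup>2 = p * t"
    "M * (t * M)\<^sup>2 / (M + t * M)\<^sup>2 = p * t\<^sup>2" by simp_all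
qed

lemma increments_tau:
  fixes p u :: real
  assumes "0 < p" "0 < u"
  defines "t \<equiv> tau (u / p)"
  shows "0 < t" "u = p * t * (1 + 2 * t)" "p * (cfun (u / p) - 1) = p * t * (t + 2)"
    "u * (dfun (u / p) - 1) = p * t ^ 3"
proof -
  have r: "0 < u / p" using assms by simp
  show "0 < t" "p * (cfun (u / p) - 1) = p * t * (t + 2)"
    using tau_pos[OF r] by (simp_all add: t_def cfun_minus_one_tau)
  show u: "u = p * t * (1 + 2 * t)"
    using tau_param[OF r] assms by (simp add: t_def field_simps)
  have "u * (dfun (u / p) - 1) = u * (t\<^sup>2 / (1 + 2 * t))"
    using dfun_minus_one_tau[OF r] by (simp add: t_def)
  also have "\<dots> = p * t * (1 + 2 * t) * (t\<^sup>2 / (1 + 2 * t))"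
    by (subst u) (rule refl)
  also have "\<dots> = p * t ^ 3"
    using \<open>0 < t\<close> by (simp add: power2_eq_square power3_eq_cube)
  finally show "u * (dfun (u / p) - 1) = p * t ^ 3" .
qed

lemma ABMN_local_iff_cd:
  "ABMN_local a b p P u U \<longleftrightarrow> 0 < p \<and> 0 < u \<and>
     P = p * (cfun (u / p) - 1) \<and> U = u * (dfun (u / p) - 1) \<and>
     a = (P + p)\<^sup>2 * (U + u) / ((P + p) + (U + u))\<^sup>2 \<and>
     b = (P + p) * (U + u)\<^sup>2 / ((P + p) + (U + u))\<^sup>2"
    (is "_ \<longleftrightarrow> ?cd")
proof -
  have weights: "(P + p)\<^sup>2 * (U + u) / ((P + p) + (U + u))\<^sup>2 = p * t \<and>
      (P + p) * (U + u)\<^sup>2 / ((P + p) + (U + u))\<^sup>2 = p * t\<^sup>2"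
    if "0 < p" "0 < t" "P = p * t * (t + 2)" "u = p * t * (1 + 2 * t)" "U = p * t ^ 3" for t
  proof -
    have "P + p = p * (1 + t)\<^sup>2" "U + u = t * (p * (1 + t)\<^sup>2)"
      using that by (simp_all add: algebra_simps power2_eq_square power3_eq_cube)
    with weights_param[OF that(1,2)] show ?thesis by simp
  qed
  show ?thesis
  proof
    assume "ABMN_local a b p P u U"
    then obtain t where t: "0 < t" "0 < p" "a = p * t" "b = p * t\<^sup>2" "P = p * t * (t + 2)"
        "u = p * t * (1 + 2 * t)" "U = p * t ^ 3"
      using ABMN_local_imp_param by blast
    then have "0 < u" by simp
    moreover have "tau (u / p) = t"
      using t tau_of_param[of t] by simp
    ultimately show ?cd
      using t increments_tau[of p u] weights[of t] by simp
  next
    assume ?cd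
    then have "0 < p" "0 < u" by simp_all
    with \<open>?cd\<close> show "ABMN_local a b p P u U"
      unfolding ABMN_local_iff_param
      using increments_tau[of p u] weights[of "tau (u / p)"] by auto
  qed
qed

lemma ABMN_positive_iff_local:
  fixes a b m n :: "int \<Rightarrow> real"
  shows "ABMN_positive a b m n \<longleftrightarrow> (\<forall>i. ABMN_local (a i) (b i)
    (m i - m (i - 1)) (m (i + 1) - m i) (n (i - 1) - n i) (n i - n (i + 1)))"
proof -
  have "(a + b) * (mi + a) = a * m1 + b * m0 \<longleftrightarrow> (a + b) * a = a * (m1 - mi) - b * (mi - m0)"
    "(a + b) * (ni + b) = a * n1 + b * n0 \<longleftrightarrow> (a + b) * b = b * (n0 - ni) - a * (ni - n1)"
    for a b mi m0 m1 ni n0 n1 :: real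
    by (simp_all add: algebra_simps)
  then show ?thesis
    by (auto simp: ABMN_positive_def ABMN_solution_def ABMN_local_def less_imp_le)
qed

section \<open>Default solutions\<close>

lemma mono_int_if_step:
  fixes f :: "int \<Rightarrow> 'a::order"
  assumes "\<And>k. f k \<le> f (k + 1)"
  shows "mono f"
proof
  fix i j :: int
  assume "i \<le> j"
  then show "f i \<le> f j"
    by (induction j rule: int_ge_induct) (auto intro: order_trans assms)
qed

lemma antimono_int_if_step:
  fixes f :: "int \<Rightarrow> 'a::order"
  assumes "\<And>k. f (k + 1) \<le> f k"
  shows "antimono f"
proof
  fix i j :: int
  assume "i \<le> j"
  then show "f j \<le> f i"
    by (induction j rule: int_ge_induct) (auto intro: order_trans assms)
qed

lemma ABMN_default_if_is_def_solution:
  assumes x: "0 < x" and H: "is_def_solution x a b m n"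
  shows "ABMN_default a b m n \<and> (n (-1) - n 0) / (m 0 - m (-1)) = x"
proof -
  have dm: "m (k + 1) - m k = cprod x k" and dn: "n k - n (k + 1) = x * dprod x k"
    and ab: "a i = (m (i + 1) - m (i - 1))\<^sup>2 * (n (i - 1) - n (i + 1))
                 / ((m (i + 1) - m (i - 1)) + (n (i - 1) - n (i + 1)))\<^sup>2"
            "b i = (m (i + 1) - m (i - 1)) * (n (i - 1) - n (i + 1))\<^sup>2
                 / ((m (i + 1) - m (i - 1)) + (n (i - 1) - n (i + 1)))\<^sup>2"
    for k i using H by (simp_all add: is_def_solution_def)
  have "ABMN_local (a i) (b i) (m i - m (i - 1)) (m (i + 1) - m i) (n (i - 1) - n i)
      (n i - n (i + 1))" for i
  proof -
    have p: "m i - m (i - 1) = cprod x (i - 1)" and u: "n (i - 1) - n i = x * dprod x (i - 1)"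
      using dm[of "i - 1"] dn[of "i - 1"] by simp_all
    have r: "x * dprod x (i - 1) / cprod x (i - 1) = s_iter i x"
      using dprod_eq_s_iter_cprod[OF x, of "i - 1"] cprod_pos[OF x, of "i - 1"]
      by (simp add: field_simps)
    have "m (i + 1) - m (i - 1) = (m (i + 1) - m i) + (m i - m (i - 1))"
      "n (i - 1) - n (i + 1) = (n i - n (i + 1)) + (n (i - 1) - n i)" by simp_all
    with ab[of i] show ?thesis
      unfolding ABMN_local_iff_cd p u dm dn r
      using cprod_pos[OF x] dprod_pos[OF x] cprod_step[OF x, of i] dprod_step[OF x, of i] x
      by (simp add: c_j_def d_j_def mult.commute)
  qed
  moreover have "m 0 - m (-1) = 1" "n (-1) - n 0 = x"
    using dm[of "-1"] dn[of "-1"] by simp_all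
  ultimately show ?thesis
    using H x by (simp add: ABMN_default_def ABMN_positive_iff_local is_def_solution_def)
qed

lemma increments_eq_products:
  fixes p u :: "int \<Rightarrow> real"
  assumes x: "0 < x" and pos: "\<And>k. 0 < p k" "\<And>k. 0 < u k"
    and p_step: "\<And>k. p (k + 1) = p k * (cfun (u k / p k) - 1)"
    and u_step: "\<And>k. u (k + 1) = u k * (dfun (u k / p k) - 1)"
    and p0: "p (-1) = 1" and u0: "u (-1) = x"
  shows "p k = cprod x k \<and> u k = x * dprod x k"
proof -
  have ratio_step: "u (k + 1) / p (k + 1) = sfun (u k / p k)" for k
  proof -
    define y where "y = u k / p k"
    have "0 < y" using pos by (simp add: y_def)
    have "u (k + 1) / p (k + 1) = u k * (dfun y - 1) / (p k * (cfun y - 1))"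
      unfolding y_def by (simp only: p_step u_step)
    also have "\<dots> = y * (dfun y - 1) / (cfun y - 1)"
      by (simp add: y_def)
    also have "\<dots> = sfun y"
      using sfun_cfun_eq_dfun[OF \<open>0 < y\<close>] cfun_minus_one_pos[OF \<open>0 < y\<close>]
      by (metis nonzero_mult_div_cancel_right less_irrefl)
    finally show ?thesis by (simp add: y_def)
  qed
  have "u k / p k = s_iter (k + 1) (u (-1) / p (-1))" for k
    using pos by (intro s_iter_orbit[of "\<lambda>k. u k / p k"] ratio_step) simp
  then have ratio: "u k / p k = s_iter (k + 1) x" for k
    by (simp add: p0 u0)
  have p_rec: "p k = (c_j k x - 1) * p (k - 1)" and u_rec: "u k = (d_j k x - 1) * u (k - 1)" for k
  proof -
    have "p k = p (k - 1) * (cfun (u (k - 1) / p (k - 1)) - 1)"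
      "u k = u (k - 1) * (dfun (u (k - 1) / p (k - 1)) - 1)"
      using p_step[of "k - 1"] u_step[of "k - 1"] by simp_all
    then show "p k = (c_j k x - 1) * p (k - 1)" "u k = (d_j k x - 1) * u (k - 1)"
      using ratio[of "k - 1"] by (simp_all add: c_j_def d_j_def)
  qed
  show ?thesis
    using eq_gprod_if_recurrence[of p "\<lambda>i. c_j i x - 1", OF p_rec]
      eq_gprod_if_recurrence[of u "\<lambda>i. d_j i x - 1", OF u_rec]
      c_j_minus_one_pos[OF x, THEN less_imp_neq, THEN not_sym]
      d_j_minus_one_pos[OF x, THEN less_imp_neq, THEN not_sym]
    by (simp add: p0 u0)
qed

lemma is_def_solution_if_ABMN_default:
  assumes x: "0 < x" and D: "ABMN_default a b m n"
    and R: "(n (-1) - n 0) / (m 0 - m (-1)) = x"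
  shows "is_def_solution x a b m n"
proof -
  define p u where "p k = m (k + 1) - m k" and "u k = n k - n (k + 1)" for k
  have loc: "ABMN_local (a i) (b i) (p (i - 1)) (p i) (u (i - 1)) (u i)" for i
    using D by (simp add: ABMN_default_def ABMN_positive_iff_local p_def u_def)
  have pos: "0 < p k" "0 < u k"
    and "p (k + 1) = p k * (cfun (u k / p k) - 1)"
    and "u (k + 1) = u k * (dfun (u k / p k) - 1)" for k
    using loc[of "k + 1"] unfolding ABMN_local_iff_cd by simp_all
  moreover have "p (-1) = 1" "u (-1) = x"
    using D R by (simp_all add: ABMN_default_def p_def u_def)
  ultimately have "p k = cprod x k \<and> u k = x * dprod x k" for k
    using x by (intro increments_eq_products) auto
  then have "m (k + 1) - m k = cprod x k" "n k - n (k + 1) = x * dprod x k" for k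
    by (simp_all add: p_def u_def)
  moreover have "mono m"
    using pos(1) by (intro mono_int_if_step) (simp add: p_def less_imp_le)
  moreover have "antimono n"
    using pos(2) by (intro antimono_int_if_step) (simp add: u_def less_imp_le)
  moreover have "a i = (m (i + 1) - m (i - 1))\<^sup>2 * (n (i - 1) - n (i + 1))
                 / ((m (i + 1) - m (i - 1)) + (n (i - 1) - n (i + 1)))\<^sup>2"
    "b i = (m (i + 1) - m (i - 1)) * (n (i - 1) - n (i + 1))\<^sup>2
                 / ((m (i + 1) - m (i - 1)) + (n (i - 1) - n (i + 1)))\<^sup>2" for i
  proof -
    have "p i + p (i - 1) = m (i + 1) - m (i - 1)" "u i + u (i - 1) = n (i - 1) - n (i + 1)"
      by (simp_all add: p_def u_def)
    with loc[of i] show "a i = (m (i + 1) - m (i - 1))\<^sup>2 * (n (i - 1) - n (i + 1))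
                 / ((m (i + 1) - m (i - 1)) + (n (i - 1) - n (i + 1)))\<^sup>2"
      "b i = (m (i + 1) - m (i - 1)) * (n (i - 1) - n (i + 1))\<^sup>2
                 / ((m (i + 1) - m (i - 1)) + (n (i - 1) - n (i + 1)))\<^sup>2"
      unfolding ABMN_local_iff_cd by metis+
  qed
  ultimately show ?thesis
    using D by (simp add: is_def_solution_def ABMN_default_def)
qed

lemma eq_if_increments_eq_tendsto_zero:
  fixes f g :: "int \<Rightarrow> real"
  assumes inc: "\<And>k. f (k + 1) - f k = g (k + 1) - g k"
    and "(f \<longlongrightarrow> 0) F" "(g \<longlongrightarrow> 0) F" "F \<noteq> bot"
  shows "f = g"
proof -
  have const: "f k - g k = f 0 - g 0" for k
  proof (induction k rule: int_induct[where k = 0])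
    case (step1 i)
    then show ?case using inc[of i] by simp
  next
    case (step2 i)
    then show ?case using inc[of "i - 1"] by simp
  qed simp
  have "((\<lambda>k. f k - g k) \<longlongrightarrow> 0 - 0) F"
    using assms by (intro tendsto_diff)
  moreover have "(\<lambda>k. f k - g k) = (\<lambda>k. f 0 - g 0)"
    using const by (rule ext)
  ultimately have "((\<lambda>k. f 0 - g 0) \<longlongrightarrow> 0) F"
    by simp
  then have "f 0 - g 0 = 0"
    using \<open>F \<noteq> bot\<close> by (simp add: tendsto_const_iff)
  then show ?thesis using const by auto
qed

lemma is_def_solution_unique:
  assumes "is_def_solution x a b m n" "is_def_solution x a' b' m' n'"
  shows "a = a' \<and> b = b' \<and> m = m' \<and> n = n'"
proof -
  have "m = m'"
    using assms by (intro eq_if_increments_eq_tendsto_zero[where F = at_bot])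
      (simp_all add: is_def_solution_def)
  moreover have "n = n'"
  proof (rule eq_if_increments_eq_tendsto_zero[where F = at_top])
    fix k
    have "n k - n (k + 1) = n' k - n' (k + 1)"
      using assms by (simp add: is_def_solution_def)
    then show "n (k + 1) - n k = n' (k + 1) - n' k" by simp
  qed (use assms in \<open>simp_all add: is_def_solution_def\<close>)
  ultimately show ?thesis
    using assms by (auto simp: is_def_solution_def)
qed

definition sum_below :: "(int \<Rightarrow> real) \<Rightarrow> int \<Rightarrow> real" where
  "sum_below h k = (\<Sum>n. h (k - 1 - int n))"

lemma summable_int_down_shift:
  fixes h :: "int \<Rightarrow> real"
  assumes "summable (\<lambda>n. h (- int n))"
  shows "summable (\<lambda>n. h (k - int n))"
proof (cases "0 \<le> k")
  case True
  then have "(\<lambda>n. h (k - int (n + nat k))) = (\<lambda>n. h (- int n))" by auto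
  with assms show ?thesis
    using summable_iff_shift[of "\<lambda>n. h (k - int n)" "nat k"] by simp
next
  case False
  then have "(\<lambda>n. h (k - int n)) = (\<lambda>n. h (- int (n + nat (- k))))" by auto
  with assms show ?thesis
    using summable_iff_shift[of "\<lambda>n. h (- int n)" "nat (- k)"] by simp
qed

lemma sum_below_succ:
  assumes "summable (\<lambda>n. h (- int n))"
  shows "sum_below h (k + 1) - sum_below h k = h k"
proof -
  have "(\<Sum>n. h (k - int (Suc n))) = (\<Sum>n. h (k - int n)) - h k"
    using suminf_split_head[OF summable_int_down_shift[OF assms, of k]] by simp
  moreover have "(\<lambda>n. h (k - int (Suc n))) = (\<lambda>n. h (k - 1 - int n))"
    by (simp add: algebra_simps)
  ultimately show ?thesis by (simp add: sum_below_def)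
qed

lemma sum_below_tendsto_zero:
  assumes "summable (\<lambda>n. h (- int n))"
  shows "(sum_below h \<longlongrightarrow> 0) at_bot"
proof -
  define g where "g = (\<lambda>n. h (- int n))"
  define tail where "tail N = (\<Sum>n. g (n + N))" for N
  have g: "summable g" using assms by (simp add: g_def)
  have "(\<lambda>N. (\<Sum>n. g n) - (\<Sum>i<N. g i)) \<longlonglongrightarrow> (\<Sum>n. g n) - (\<Sum>n. g n)"
    using g by (intro tendsto_diff tendsto_const summable_LIMSEQ)
  moreover have "tail = (\<lambda>N. (\<Sum>n. g n) - (\<Sum>i<N. g i))"
    using suminf_minus_initial_segment[OF g] by (auto simp: tail_def)
  ultimately have "tail \<longlonglongrightarrow> 0" by simp
  moreover have "filterlim (\<lambda>k. nat (1 - k)) sequentially at_bot"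
    unfolding filterlim_at_top eventually_at_bot_linorder
  proof
    fix Z :: nat
    show "\<exists>N. \<forall>k \<le> N. Z \<le> nat (1 - k)"
      by (rule exI[of _ "- int Z"]) auto
  qed
  ultimately have "((\<lambda>k. tail (nat (1 - k))) \<longlongrightarrow> 0) at_bot"
    by (rule filterlim_compose)
  moreover have "\<forall>\<^sub>F k in at_bot. tail (nat (1 - k)) = sum_below h k"
    unfolding eventually_at_bot_linorder
    by (auto intro!: exI[of _ 1] simp: tail_def g_def sum_below_def algebra_simps)
  ultimately show ?thesis by (rule Lim_transform_eventually)
qed

lemma is_def_solution_exists:
  assumes x: "0 < x"
  shows "\<exists>a b m n. is_def_solution x a b m n"
proof -
  define h where "h = (\<lambda>j. x * dprod x (- j))"
  define m where "m = sum_below (cprod x)"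
  \<comment> \<open>n k is the sum of x * dprod x j over all j \<ge> k.\<close>
  define n where "n k = sum_below h (1 - k)" for k
  have hs: "summable (\<lambda>k. h (- int k))"
    using summable_dprod[OF x] by (simp add: h_def)
  have dm: "m (k + 1) - m k = cprod x k" for k
    using sum_below_succ[OF summable_cprod[OF x]] by (simp add: m_def)
  have dn: "n k - n (k + 1) = x * dprod x k" for k
    using sum_below_succ[OF hs, of "- k"] by (simp add: n_def h_def)
  have "mono m"
    using dm cprod_pos[OF x] by (intro mono_int_if_step) (metis diff_gt_0_iff_gt less_imp_le)
  moreover have "antimono n"
    using dn dprod_pos[OF x] x
    by (intro antimono_int_if_step) (metis diff_gt_0_iff_gt less_imp_le mult_pos_pos)
  moreover have "(m \<longlongrightarrow> 0) at_bot"
    unfolding m_def by (rule sum_below_tendsto_zero[OF summable_cprod[OF x]])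
  moreover have "filterlim (\<lambda>k::int. 1 - k) at_bot at_top"
    unfolding filterlim_at_bot eventually_at_top_linorder
  proof
    fix Z :: int
    show "\<exists>N. \<forall>k \<ge> N. 1 - k \<le> Z"
      by (rule exI[of _ "1 - Z"]) auto
  qed
  then have "(n \<longlongrightarrow> 0) at_top"
    unfolding n_def using sum_below_tendsto_zero[OF hs] by (rule filterlim_compose[rotated])
  ultimately have "is_def_solution x
      (\<lambda>i. (m (i + 1) - m (i - 1))\<^sup>2 * (n (i - 1) - n (i + 1))
                 / ((m (i + 1) - m (i - 1)) + (n (i - 1) - n (i + 1)))\<^sup>2)
      (\<lambda>i. (m (i + 1) - m (i - 1)) * (n (i - 1) - n (i + 1))\<^sup>2
                 / ((m (i + 1) - m (i - 1)) + (n (i - 1) - n (i + 1)))\<^sup>2) m n"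
    using dm dn by (simp add: is_def_solution_def)
  then show ?thesis by blast
qed

theorem mainTheorem10:
  fixes x :: real
  assumes "x > 0"
  shows "(\<exists>!(a, b, m, n). ABMN_default a b m n \<and> (n (-1) - n 0) / (m 0 - m (-1)) = x)
    \<and> (\<exists>a b m n. is_def_solution x a b m n)
    \<and> (\<forall>a b m n. (ABMN_default a b m n \<and> (n (-1) - n 0) / (m 0 - m (-1)) = x)
                  \<longleftrightarrow> is_def_solution x a b m n)"
proof -
  have iff: "\<forall>a b m n. (ABMN_default a b m n \<and> (n (-1) - n 0) / (m 0 - m (-1)) = x)
                  \<longleftrightarrow> is_def_solution x a b m n"
    using ABMN_default_if_is_def_solution is_def_solution_if_ABMN_default assms by blast
  obtain a b m n where sol: "is_def_solution x a b m n"
    using is_def_solution_exists[OF assms] by blast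
  have "\<exists>!(a, b, m, n). is_def_solution x a b m n"
    using sol is_def_solution_unique by (intro ex1I[of _ "(a, b, m, n)"]) auto
  with iff sol show ?thesis by auto
qed

end
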